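(* Let $L=(L_{\mathsf{yes}},L_{\mathsf{no}})$ be a $\mathbf{QMA}$ promise problem with an associated 2-local $\{ZZ,XX\}$ Hamiltonian family as described in the context, with parameters $\alpha<\beta$. Then the protocol $\Pi_{\mathsf{NIP}}$ described in the context satisfies $(1-\alpha)$-completeness and adaptive statistical $(1-\beta)$-soundness.
   Context: Hamiltonian family: a classical deterministic polynomial-time map sends $\mathtt{x}$ to an $N$-qubit Hamiltonian $\mathcal{H}_\mathtt{x}=\sum_{j_1<j_2}\frac{p_{j_1,j_2}}{2}\left(\frac{I+s_{j_1,j_2}X_{j_1}X_{j_2}}{2}+\frac{I+s_{j_1,j_2}Z_{j_1}Z_{j_2}}{2}\right)$ with $N=\mathsf{poly}(|\mathtt{x}|)$, $p_{j_1,j_2}>0$, $\sum p_{j_1,j_2}=1$, $s_{j_1,j_2}\in\{\pm1\}$; there are $0<\alpha<\beta<1$ with $\beta-\alpha\ge1/\mathsf{poly}(|\mathtt{x}|)$ such that for $\mathtt{x}\in L_{\mathsf{yes}}$ any witness $\mathtt{w}\in R_L(\mathtt{x})$ can be converted in quantum polynomial time into $\rho_{\mathrm{hist}}$ with $\mathrm{Tr}(\rho_{\mathrm{hist}}\mathcal{H}_\mathtt{x})\le\alpha$, and for $\mathtt{x}\in L_{\mathsf{no}}$ every $N$-qubit $\rho$ has $\mathrm{Tr}(\rho\mathcal{H}_\mathtt{x})\ge\beta$. $H$ is the Hadamard gate. Bell measurement outcomes $(x_j,z_j)$ follow the teleportation convention (measuring a qubit of $\rho$ together with half of a Bell pair yields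 $(x,z)$ and leaves the other half in $X^xZ^z\rho Z^zX^x$). Protocol $\Pi_{\mathsf{NIP}}$: $\mathsf{Setup}(1^\lambda)$ samples $(h,m_1,\dots,m_N)\leftarrow\{0,1\}^{N+1}$ and outputs $k_P=\bigotimes_{j=1}^N H^h|m_j\rangle$ and $k_V=(h,m_1,\dots,m_N)$. $\mathsf{Prove}(k_P,\mathtt{x},\mathtt{w})$ builds $\rho_{\mathrm{hist}}$ from $\mathtt{w}$, Bell-measures the $j$-th qubits of $\rho_{\mathrm{hist}}$ and $k_P$ for each $j\in[N]$, and outputs $\pi=(x,z)$ of outcomes. $\mathsf{Verify}(k_V,\mathtt{x},\pi)$ samples $(j_1,j_2)$ with probability $p_{j_1,j_2}$, sets $m'_{j_b}=m_{j_b}\oplus(hz_{j_b}\oplus(1-h)x_{j_b})$ for $b\in\{1,2\}$, and outputs $\top$ iff $(-1)^{m'_{j_1}\oplus m'_{j_2}}=-s_{j_1,j_2}$. $c$-completeness: for all $\mathtt{x}\in L_{\mathsf{yes}}$, $\mathtt{w}\in R_L(\mathtt{x})$, the honest proof is accepted with probability $\ge c$. Adaptive statistical $s$-soundness: for every unbounded $\mathcal{A}$ receiving $k_P$ and outputting $(\mathtt{x},\pi)$, $\Pr[\mathtt{x}\in L_{\mathsf{no}}\wedge\mathsf{Verify}(k_V,\mathtt{x},\pi)=\top]\le s$. *)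

theory Defs
  imports Complex_Main
begin

text \<open>An n-qubit operator is a complex matrix indexed by computational-basis
strings, i.e. boolean lists of length n (bit True = 1).  Qubits are indexed
0,...,n-1 (list positions).  Values of an operator outside bit strings of
length n are irrelevant, since all sums range over such strings.\<close>

type_synonym op = "bool list \<Rightarrow> bool list \<Rightarrow> complex"
type_synonym op1 = "bool \<Rightarrow> bool \<Rightarrow> complex"

definition bits :: "nat \<Rightarrow> bool list set" where
  "bits n = {xs. length xs = n}"

definition tr :: "nat \<Rightarrow> op \<Rightarrow> complex" where
  "tr n A = (\<Sum>a\<in>bits n. A a a)"

definition mmul :: "nat \<Rightarrow> op \<Rightarrow> op \<Rightarrow> op" where
  "mmul n A B = (\<lambda>a c. \<Sum>b\<in>bits n. A a b * B b c)"

definition psd :: "nat \<Rightarrow> op \<Rightarrow> bool" where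
  "psd n A \<longleftrightarrow> (\<forall>v :: bool list \<Rightarrow> complex.
      let q = (\<Sum>a\<in>bits n. \<Sum>b\<in>bits n. cnj (v a) * A a b * v b)
      in Im q = 0 \<and> 0 \<le> Re q)"

definition density :: "nat \<Rightarrow> op \<Rightarrow> bool" where
  "density n \<rho> \<longleftrightarrow> psd n \<rho> \<and> tr n \<rho> = 1"

definition tensor :: "nat \<Rightarrow> op \<Rightarrow> op \<Rightarrow> op" where
  "tensor n A B = (\<lambda>a b. A (take n a) (take n b) * B (drop n a) (drop n b))"

definition kron_all :: "nat \<Rightarrow> (nat \<Rightarrow> op1) \<Rightarrow> op" where
  "kron_all n Q = (\<lambda>a b. \<Prod>i<n. Q i (a ! i) (b ! i))"

definition I1 :: op1 where "I1 u v = (if u = v then 1 else 0)"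
definition X1 :: op1 where "X1 u v = (if u \<noteq> v then 1 else 0)"
definition Z1 :: op1 where "Z1 u v = (if u = v then (if u then -1 else 1) else 0)"
definition H1 :: op1 where
  "H1 u v = (if u \<and> v then -1 else 1) / complex_of_real (sqrt 2)"

definition mm1 :: "op1 \<Rightarrow> op1 \<Rightarrow> op1" where
  "mm1 A B = (\<lambda>u w. A u False * B False w + A u True * B True w)"

definition pw1 :: "op1 \<Rightarrow> bool \<Rightarrow> op1" where
  "pw1 P b = (if b then P else I1)"

definition Idq :: "nat \<Rightarrow> op" where
  "Idq n = kron_all n (\<lambda>_. I1)"

definition two_local :: "nat \<Rightarrow> op1 \<Rightarrow> nat \<Rightarrow> nat \<Rightarrow> op" where
  "two_local n P j1 j2 = kron_all n (\<lambda>i. if i = j1 \<or> i = j2 then P else I1)"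

definition pairs :: "nat \<Rightarrow> (nat \<times> nat) set" where
  "pairs n = {(j1, j2). j1 < j2 \<and> j2 < n}"

definition ham :: "nat \<Rightarrow> (nat \<times> nat \<Rightarrow> real) \<Rightarrow> (nat \<times> nat \<Rightarrow> real) \<Rightarrow> op" where
  "ham n p s = (\<lambda>a b. \<Sum>(j1, j2)\<in>pairs n. complex_of_real (p (j1, j2) / 2) *
      ((Idq n a b + complex_of_real (s (j1, j2)) * two_local n X1 j1 j2 a b) / 2
     + (Idq n a b + complex_of_real (s (j1, j2)) * two_local n Z1 j1 j2 a b) / 2))"

definition kP_vec :: "nat \<Rightarrow> bool \<Rightarrow> bool list \<Rightarrow> bool list \<Rightarrow> complex" where
  "kP_vec n h m = (\<lambda>a. \<Prod>j<n. pw1 H1 h (a ! j) (m ! j))"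

definition kP :: "nat \<Rightarrow> bool \<Rightarrow> bool list \<Rightarrow> op" where
  "kP n h m = (\<lambda>a b. kP_vec n h m a * cnj (kP_vec n h m b))"

text \<open>Bell basis fixed by the teleportation convention: outcome (x,z) on a pair
(A,B) corresponds to the vector (Z^z X^x \<otimes> I)|Phi+>, so that measuring A together
with half B of a Bell pair BC leaves C in X^x Z^z rho Z^z X^x.\<close>
definition bell_amp :: "bool \<Rightarrow> bool \<Rightarrow> bool \<Rightarrow> bool \<Rightarrow> complex" where
  "bell_amp x z u v = mm1 (pw1 Z1 z) (pw1 X1 x) u v / complex_of_real (sqrt 2)"

definition bell_proj :: "nat \<Rightarrow> bool list \<Rightarrow> bool list \<Rightarrow> op" where
  "bell_proj n xs zs = (\<lambda>a b. \<Prod>j<n.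
      bell_amp (xs ! j) (zs ! j) (a ! j) (a ! (n + j))
      * cnj (bell_amp (xs ! j) (zs ! j) (b ! j) (b ! (n + j))))"

definition prove_prob :: "nat \<Rightarrow> op \<Rightarrow> bool \<Rightarrow> bool list \<Rightarrow> bool list \<times> bool list \<Rightarrow> real" where
  "prove_prob n \<rho> h m \<pi> =
     Re (tr (2 * n) (mmul (2 * n) (bell_proj n (fst \<pi>) (snd \<pi>)) (tensor n \<rho> (kP n h m))))"

definition sgn_bit :: "bool \<Rightarrow> real" where
  "sgn_bit b = (if b then -1 else 1)"

definition mprime :: "bool \<Rightarrow> bool list \<Rightarrow> bool list \<times> bool list \<Rightarrow> nat \<Rightarrow> bool" where
  "mprime h m \<pi> j = (m ! j \<noteq> (if h then snd \<pi> ! j else fst \<pi> ! j))"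

text \<open>Probability (over the verifier's choice of (j1,j2)) that
Verify((h,m), x, pi) accepts, where the instance x has Hamiltonian data (p,s).\<close>
definition verify_prob :: "nat \<Rightarrow> (nat \<times> nat \<Rightarrow> real) \<Rightarrow> (nat \<times> nat \<Rightarrow> real)
     \<Rightarrow> bool \<Rightarrow> bool list \<Rightarrow> bool list \<times> bool list \<Rightarrow> real" where
  "verify_prob n p s h m \<pi> = (\<Sum>(j1, j2)\<in>pairs n. p (j1, j2) *
      (if sgn_bit (mprime h m \<pi> j1 \<noteq> mprime h m \<pi> j2) = - s (j1, j2) then 1 else 0))"

definition honest_accept :: "nat \<Rightarrow> (nat \<times> nat \<Rightarrow> real) \<Rightarrow> (nat \<times> nat \<Rightarrow> real) \<Rightarrow> op \<Rightarrow> real" where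
  "honest_accept n p s \<rho> = (\<Sum>h\<in>(UNIV::bool set). \<Sum>m\<in>bits n. (1 / 2 ^ (n + 1)) *
      (\<Sum>\<pi>\<in>bits n \<times> bits n. prove_prob n \<rho> h m \<pi> * verify_prob n p s h m \<pi>))"

text \<open>An unbounded adaptive adversary receiving the n-qubit state k_P and
outputting a classical pair (x, pi) is described by a (sub-normalised,
possibly countably/infinitely indexed) POVM F on n qubits indexed by the
outputs: every F o is PSD and every finite partial sum is below the identity.\<close>
definition adversary :: "nat \<Rightarrow> ('x \<times> (bool list \<times> bool list) \<Rightarrow> op) \<Rightarrow> bool" where
  "adversary n F \<longleftrightarrow> (\<forall>ou. psd n (F ou)) \<and>
     (\<forall>S. finite S \<longrightarrow> psd n (\<lambda>a b. Idq n a b - (\<Sum>ou\<in>S. F ou a b)))"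

text \<open>Probability of the event "adversary outputs some o in S, fst o in Lno and
Verify accepts".  The probability of the event over all outputs is the
supremum of this over finite S.\<close>
definition cheat_prob :: "nat \<Rightarrow> ('x \<times> (bool list \<times> bool list) \<Rightarrow> op) \<Rightarrow> 'x set
    \<Rightarrow> ('x \<Rightarrow> nat \<times> nat \<Rightarrow> real) \<Rightarrow> ('x \<Rightarrow> nat \<times> nat \<Rightarrow> real)
    \<Rightarrow> ('x \<times> (bool list \<times> bool list)) set \<Rightarrow> real" where
  "cheat_prob n F Lno p s S = (\<Sum>h\<in>(UNIV::bool set). \<Sum>m\<in>bits n. (1 / 2 ^ (n + 1)) *
      (\<Sum>ou\<in>S. (if fst ou \<in> Lno then
          Re (tr n (mmul n (F ou) (kP n h m))) * verify_prob n (p (fst ou)) (s (fst ou)) h m (snd ou)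
        else 0)))"

end

theory Submission
  imports Defs
begin

text \<open>Write psi(h, m) = H^h |m> for the key state. Bell-measuring rho against the key teleports rho:
  the outcome (x, z) has probability 2^-n <psi(h, m xor c)| rho |psi(h, m xor c)> with c = z for
  h = 1 and c = x for h = 0, and the verifier's decoded string m' is exactly m xor c. Re-indexing
  the uniform m, the verifier therefore runs its parity test on the outcome of measuring rho in
  the basis H^h. For the pair (j1, j2) the test accepts on (I - s P_j1 P_j2) / 2 with P = Z for
  h = 0 and P = X for h = 1; averaging over h turns this into I minus the (j1, j2) term of the
  Hamiltonian divided by p(j1, j2), so the acceptance probability is 1 - tr(rho H).

  A cheating outcome with POVM element F and proof (x, z) is accepted exactly as often as an honest
  measurement of sigma = Z^z X^x F X^x Z^z, that is with probability
  2^-n (tr sigma - tr(sigma H)) <= 2^-n (1 - beta) tr F, by the promise applied to sigma / tr sigma.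
  Summing over outcomes and using that the POVM elements add up to at most the identity, whose
  trace is 2^n, bounds the cheating probability by 1 - beta.\<close>

section \<open>Bit strings and operators\<close>

lemma bits_Suc: "bits (Suc n) = (\<lambda>(u, a). u # a) ` (UNIV \<times> bits n)"
  unfolding bits_def by (auto simp: image_iff length_Suc_conv)

lemma inj_on_Cons_bits: "inj_on (\<lambda>(u, a). u # a) (UNIV \<times> bits n)"
  by (auto simp: inj_on_def)

lemma finite_bits [simp]: "finite (bits n)"
  by (induction n) (simp_all add: bits_def[of 0] bits_Suc)

lemma card_bits: "card (bits n) = 2 ^ n"
  by (induction n) (simp_all add: bits_def[of 0] bits_Suc card_image[OF inj_on_Cons_bits] card_cartesian_product)

lemma sum_bits_prod:
  fixes F :: "nat \<Rightarrow> bool \<Rightarrow> 'a::comm_semiring_1"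
  shows "(\<Sum>m\<in>bits n. \<Prod>j<n. F j (m ! j)) = (\<Prod>j<n. F j False + F j True)"
proof (induction n arbitrary: F)
  case 0
  then show ?case by (simp add: bits_def)
next
  case (Suc n)
  have "(\<Sum>m\<in>bits (Suc n). \<Prod>j<Suc n. F j (m ! j))
      = (\<Sum>u\<in>UNIV. \<Sum>a\<in>bits n. F 0 u * (\<Prod>j<n. F (Suc j) (a ! j)))"
    unfolding bits_Suc sum.reindex[OF inj_on_Cons_bits] sum.cartesian_product
    by (simp add: case_prod_beta prod.lessThan_Suc_shift del: prod.lessThan_Suc)
  also have "\<dots> = (\<Prod>j<Suc n. F j False + F j True)"
    by (simp add: sum_distrib_left[symmetric] Suc.IH[of "\<lambda>j. F (Suc j)"] UNIV_bool distrib_right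
        prod.lessThan_Suc_shift del: prod.lessThan_Suc)
  finally show ?case .
qed

lemma sum_bits_append:
  "(\<Sum>a\<in>bits (n + k). f a) = (\<Sum>a1\<in>bits n. \<Sum>a2\<in>bits k. f (a1 @ a2))"
proof -
  have "x \<in> (\<lambda>(a, b). a @ b) ` (bits n \<times> bits k)" if "x \<in> bits (n + k)" for x
    using that unfolding bits_def by (intro rev_image_eqI[of "(take n x, drop n x)"]) auto
  then have "bits (n + k) = (\<lambda>(a, b). a @ b) ` (bits n \<times> bits k)"
    by (auto simp: bits_def)
  moreover have "inj_on (\<lambda>(a, b). a @ b) (bits n \<times> bits k)"
    by (auto simp: inj_on_def bits_def)
  ultimately show ?thesis
    by (simp only: sum.reindex sum.cartesian_product) (simp add: case_prod_beta)
qed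

definition xor_bits :: "bool list \<Rightarrow> bool list \<Rightarrow> bool list" where
  "xor_bits a c = map2 (\<noteq>) a c"

lemma length_xor_bits [simp]: "length (xor_bits a c) = min (length a) (length c)"
  by (simp add: xor_bits_def)

lemma nth_xor_bits [simp]:
  "j < length a \<Longrightarrow> j < length c \<Longrightarrow> xor_bits a c ! j = (a ! j \<noteq> c ! j)"
  by (simp add: xor_bits_def)

lemma xor_bits_cancel: "a \<in> bits n \<Longrightarrow> length c = n \<Longrightarrow> xor_bits (xor_bits a c) c = a"
  by (rule nth_equalityI) (auto simp: bits_def)

lemma sum_bits_xor_bits:
  assumes "length c = n"
  shows "(\<Sum>a\<in>bits n. f (xor_bits a c)) = (\<Sum>a\<in>bits n. f a)"
  by (rule sum.reindex_bij_witness[where i="\<lambda>a. xor_bits a c" and j="\<lambda>a. xor_bits a c"])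
    (auto simp: xor_bits_cancel assms bits_def)

lemma sum_sum_bits_xor_bits:
  assumes "length c = n"
  shows "(\<Sum>a\<in>bits n. \<Sum>b\<in>bits n. f (xor_bits a c) (xor_bits b c))
       = (\<Sum>a\<in>bits n. \<Sum>b\<in>bits n. f a b)"
  using sum_bits_xor_bits[OF assms, of "\<lambda>a. \<Sum>b\<in>bits n. f a (xor_bits b c)"]
    sum_bits_xor_bits[OF assms, of "f _"]
  by simp

lemma prod_lessThan_two_sites:
  fixes g :: "nat \<Rightarrow> 'a::comm_monoid_mult"
  assumes "j1 < j2" "j2 < n"
  shows "(\<Prod>j<n. if j = j1 \<or> j = j2 then g j else 1) = g j1 * g j2"
proof -
  have "{j. j < n \<and> (j = j1 \<or> j = j2)} = {j1, j2}"
    using assms by auto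
  then show ?thesis
    using assms by (simp add: prod.inter_filter[symmetric])
qed

lemma Idq_apply: "a \<in> bits n \<Longrightarrow> b \<in> bits n \<Longrightarrow> Idq n a b = (if a = b then 1 else 0)"
  by (auto simp: Idq_def kron_all_def I1_def bits_def list_eq_iff_nth_eq prod_zero_iff)

lemma tr_mmul: "tr n (mmul n A B) = (\<Sum>a\<in>bits n. \<Sum>b\<in>bits n. A a b * B b a)"
  by (simp add: tr_def mmul_def)

lemma tr_mmul_Idq: "tr n (mmul n A (Idq n)) = tr n A"
proof -
  have "tr n (mmul n A (Idq n)) = (\<Sum>a\<in>bits n. \<Sum>b\<in>bits n. if b = a then A a b else 0)"
    unfolding tr_mmul by (intro sum.cong refl) (simp add: Idq_apply)
  then show ?thesis
    by (simp add: tr_def)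
qed

lemma tr_mmul_sum_right:
  "tr n (mmul n A (\<lambda>a b. \<Sum>J\<in>P. B J a b)) = (\<Sum>J\<in>P. tr n (mmul n A (B J)))"
  unfolding tr_mmul
  by (simp add: sum_distrib_left) (subst sum.swap, subst (2) sum.swap, rule refl)

lemma tr_divide: "tr n (\<lambda>a b. A a b / c) = tr n A / c"
  by (simp add: tr_def sum_divide_distrib)

lemma tr_mmul_divide_left: "tr n (mmul n (\<lambda>a b. A a b / c) B) = tr n (mmul n A B) / c"
  by (simp add: tr_mmul sum_divide_distrib)

lemma psd_diag:
  assumes "psd n A" "a \<in> bits n"
  shows "Im (A a a) = 0 \<and> 0 \<le> Re (A a a)"
proof -
  define v :: "bool list \<Rightarrow> complex" where "v c = (if c = a then 1 else 0)" for c
  have "cnj (v c) * A c d * v d = (if d = a then if c = a then A a a else 0 else 0)" for c d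
    by (simp add: v_def)
  then have "(\<Sum>c\<in>bits n. \<Sum>d\<in>bits n. cnj (v c) * A c d * v d) = A a a"
    using assms(2) by simp
  moreover have "Im (\<Sum>c\<in>bits n. \<Sum>d\<in>bits n. cnj (v c) * A c d * v d) = 0
      \<and> 0 \<le> Re (\<Sum>c\<in>bits n. \<Sum>d\<in>bits n. cnj (v c) * A c d * v d)"
    using assms(1) unfolding psd_def Let_def by (rule spec[where x=v])
  ultimately show ?thesis
    by simp
qed

lemma tr_psd:
  assumes "psd n A"
  shows "tr n A = complex_of_real (Re (tr n A))" "0 \<le> Re (tr n A)"
proof -
  have "Im (tr n A) = 0"
    unfolding tr_def Im_sum using psd_diag[OF assms] by simp
  then show "tr n A = complex_of_real (Re (tr n A))"
    by (simp add: complex_eq_iff)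
  show "0 \<le> Re (tr n A)"
    unfolding tr_def Re_sum using psd_diag[OF assms] by (simp add: sum_nonneg)
qed

lemma psd_divide:
  assumes "psd n A" "0 < t"
  shows "psd n (\<lambda>a b. A a b / complex_of_real t)"
proof -
  have "(\<Sum>a\<in>bits n. \<Sum>b\<in>bits n. cnj (v a) * (A a b / complex_of_real t) * v b)
      = (\<Sum>a\<in>bits n. \<Sum>b\<in>bits n. cnj (v a) * A a b * v b) / complex_of_real t" for v
    by (simp add: sum_divide_distrib)
  then show ?thesis
    using assms unfolding psd_def Let_def by (simp add: Im_divide_of_real Re_divide_of_real)
qed

section \<open>Single-qubit identities\<close>

definition inv_sqrt2 :: real where
  "inv_sqrt2 = 1 / sqrt 2"

lemma inv_sqrt2_sq: "inv_sqrt2 * inv_sqrt2 = 1 / 2"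
  by (simp add: inv_sqrt2_def)

lemma of_real_inv_sqrt2_sq: "complex_of_real inv_sqrt2 * complex_of_real inv_sqrt2 = 1 / 2"
  by (metis inv_sqrt2_sq of_real_mult of_real_divide of_real_1 of_real_numeral)

lemma H1_eq: "H1 u v = complex_of_real (if u \<and> v then - inv_sqrt2 else inv_sqrt2)"
  by (simp add: H1_def inv_sqrt2_def)

lemma bell_amp_eq: "bell_amp x z u v = mm1 (pw1 Z1 z) (pw1 X1 x) u v * complex_of_real inv_sqrt2"
  by (simp add: bell_amp_def inv_sqrt2_def divide_complex_def)

lemma sgn_bit_simps [simp]: "sgn_bit False = 1" "sgn_bit True = -1"
  by (simp_all add: sgn_bit_def)

lemma sgn_bit_xor: "sgn_bit (u \<noteq> v) = sgn_bit u * sgn_bit v"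
  by (simp add: sgn_bit_def)

lemma sgn_bit_sq: "sgn_bit b * sgn_bit b = 1"
  by (cases b) auto

lemma H_pow_completeness:
  "cnj (pw1 H1 h a False) * pw1 H1 h b False + cnj (pw1 H1 h a True) * pw1 H1 h b True = I1 b a"
  by (cases h; cases a; cases b) (simp_all add: pw1_def H1_eq I1_def of_real_inv_sqrt2_sq)

text \<open>The sum over u of (-1)^u H^h |u><u| H^h is Z for h = 0 and X for h = 1.\<close>

lemma H_pow_spectral:
  "cnj (pw1 H1 h a False) * pw1 H1 h b False * complex_of_real (if c then sgn_bit False else 1)
   + cnj (pw1 H1 h a True) * pw1 H1 h b True * complex_of_real (if c then sgn_bit True else 1)
   = (if c then (if h then X1 else Z1) else I1) b a"
  by (cases h; cases a; cases b; cases c)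
    (simp_all add: pw1_def H1_eq I1_def X1_def Z1_def of_real_inv_sqrt2_sq)

definition pauli_phase :: "bool \<Rightarrow> bool \<Rightarrow> bool \<Rightarrow> bool \<Rightarrow> real" where
  "pauli_phase h x z m = (if h then sgn_bit (x \<and> (m \<noteq> z)) else sgn_bit (z \<and> m))"

lemma pauli_phase_sq: "pauli_phase h x z m * pauli_phase h x z m = 1"
  by (simp add: pauli_phase_def sgn_bit_sq)

text \<open>A Pauli X^x Z^z maps the key state H^h|m> to H^h|m xor (h z + (1-h) x)>, up to sign.\<close>

lemma H_pow_pauli_shift:
  "pw1 H1 h (a \<noteq> x) m * complex_of_real (sgn_bit (z \<and> (a \<noteq> x)))
   = complex_of_real (pauli_phase h x z m) * pw1 H1 h a (m \<noteq> (if h then z else x))"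
  by (cases h; cases a; cases x; cases z; cases m) (simp_all add: pw1_def H1_eq I1_def pauli_phase_def)

definition bell_phase :: "bool \<Rightarrow> bool \<Rightarrow> bool \<Rightarrow> bool \<Rightarrow> real" where
  "bell_phase h x z m = (if h then sgn_bit (x \<and> m) else sgn_bit (z \<and> (m \<noteq> x)))"

lemma bell_phase_sq: "bell_phase h x z m * bell_phase h x z m = 1"
  by (simp add: bell_phase_def sgn_bit_sq)

text \<open>Teleportation on one qubit: projecting a qubit of the key onto a Bell vector leaves the
  partner qubit in the corrected key state.\<close>

lemma bell_amp_H_pow_contract:
  "bell_amp x z a False * cnj (pw1 H1 h False m) + bell_amp x z a True * cnj (pw1 H1 h True m)
   = complex_of_real (bell_phase h x z m * inv_sqrt2) * pw1 H1 h a (m \<noteq> (if h then z else x))"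
  by (cases h; cases a; cases x; cases z; cases m)
    (simp_all add: pw1_def H1_eq I1_def X1_def Z1_def mm1_def bell_amp_eq bell_phase_def
      of_real_inv_sqrt2_sq)

section \<open>Measuring in the key basis\<close>

definition key_expect :: "nat \<Rightarrow> op \<Rightarrow> bool \<Rightarrow> bool list \<Rightarrow> real" where
  "key_expect n A h m = Re (\<Sum>a\<in>bits n. \<Sum>b\<in>bits n. cnj (kP_vec n h m a) * A a b * kP_vec n h m b)"

lemma tr_mmul_kP: "Re (tr n (mmul n A (kP n h m))) = key_expect n A h m"
  unfolding key_expect_def tr_mmul kP_def by (simp add: mult_ac)

lemma key_expect_nonneg: "psd n A \<Longrightarrow> 0 \<le> key_expect n A h m"
  unfolding key_expect_def psd_def Let_def by blast

lemma sum_kP_vec_outer_prod: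
  "(\<Sum>m\<in>bits n. cnj (kP_vec n h m a) * kP_vec n h m b * (\<Prod>j<n. f j (m ! j)))
   = (\<Prod>j<n. cnj (pw1 H1 h (a ! j) False) * pw1 H1 h (b ! j) False * f j False
            + cnj (pw1 H1 h (a ! j) True) * pw1 H1 h (b ! j) True * f j True)"
  unfolding kP_vec_def cnj_prod prod.distrib[symmetric] by (rule sum_bits_prod)

lemma sum_key_expect_prod:
  "(\<Sum>m\<in>bits n. key_expect n A h m * (\<Prod>j<n. f j (m ! j)))
   = Re (\<Sum>a\<in>bits n. \<Sum>b\<in>bits n. A a b *
       (\<Prod>j<n. cnj (pw1 H1 h (a ! j) False) * pw1 H1 h (b ! j) False * complex_of_real (f j False)
            + cnj (pw1 H1 h (a ! j) True) * pw1 H1 h (b ! j) True * complex_of_real (f j True)))"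
proof -
  let ?v = "kP_vec n h"
  let ?f = "\<lambda>m. \<Prod>j<n. complex_of_real (f j (m ! j))"
  have Re_mult: "Re z * r = Re (z * complex_of_real r)" for z r
    by simp
  have "(\<Sum>m\<in>bits n. key_expect n A h m * (\<Prod>j<n. f j (m ! j)))
      = Re (\<Sum>m\<in>bits n. (\<Sum>a\<in>bits n. \<Sum>b\<in>bits n. cnj (?v m a) * A a b * ?v m b)
              * complex_of_real (\<Prod>j<n. f j (m ! j)))"
    unfolding key_expect_def Re_mult by (rule Re_sum[symmetric])
  also have "\<dots> = Re (\<Sum>m\<in>bits n. \<Sum>a\<in>bits n. \<Sum>b\<in>bits n. A a b * (cnj (?v m a) * ?v m b * ?f m))"
    by (rule arg_cong[where f=Re]) (simp add: sum_distrib_left sum_distrib_right mult_ac of_real_prod)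
  also have "\<dots> = Re (\<Sum>a\<in>bits n. \<Sum>b\<in>bits n. \<Sum>m\<in>bits n. A a b * (cnj (?v m a) * ?v m b * ?f m))"
    by (subst sum.swap, subst (2) sum.swap, rule refl)
  also have "\<dots> = Re (\<Sum>a\<in>bits n. \<Sum>b\<in>bits n. A a b * (\<Sum>m\<in>bits n. cnj (?v m a) * ?v m b * ?f m))"
    by (simp only: sum_distrib_left)
  finally show ?thesis
    by (simp only: sum_kP_vec_outer_prod[of n h _ _ "\<lambda>j u. complex_of_real (f j u)"])
qed

lemma sum_key_expect: "(\<Sum>m\<in>bits n. key_expect n A h m) = Re (tr n A)"
proof -
  have "(\<Sum>m\<in>bits n. key_expect n A h m) = Re (\<Sum>a\<in>bits n. \<Sum>b\<in>bits n. A a b *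
       (\<Prod>j<n. cnj (pw1 H1 h (a ! j) False) * pw1 H1 h (b ! j) False
            + cnj (pw1 H1 h (a ! j) True) * pw1 H1 h (b ! j) True))"
    using sum_key_expect_prod[of n A h "\<lambda>_ _. 1"] by simp
  also have "\<dots> = Re (tr n (mmul n A (Idq n)))"
    unfolding tr_mmul Idq_def kron_all_def by (simp only: H_pow_completeness)
  finally show ?thesis
    by (simp only: tr_mmul_Idq)
qed

lemma sum_key_expect_parity:
  assumes "(j1, j2) \<in> pairs n"
  shows "(\<Sum>m\<in>bits n. key_expect n A h m * sgn_bit (m ! j1 \<noteq> m ! j2))
     = Re (tr n (mmul n A (two_local n (if h then X1 else Z1) j1 j2)))"
proof -
  have jj: "j1 < j2" "j2 < n"
    using assms by (auto simp: pairs_def)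
  let ?f = "\<lambda>j u. if j = j1 \<or> j = j2 then sgn_bit u else 1"
  have "sgn_bit (m ! j1 \<noteq> m ! j2) = (\<Prod>j<n. ?f j (m ! j))" for m
    by (simp only: sgn_bit_xor prod_lessThan_two_sites[OF jj])
  then have "(\<Sum>m\<in>bits n. key_expect n A h m * sgn_bit (m ! j1 \<noteq> m ! j2))
      = (\<Sum>m\<in>bits n. key_expect n A h m * (\<Prod>j<n. ?f j (m ! j)))"
    by simp
  also have "\<dots> = Re (tr n (mmul n A (two_local n (if h then X1 else Z1) j1 j2)))"
    unfolding sum_key_expect_prod[of n A h ?f] tr_mmul two_local_def kron_all_def
    by (simp only: H_pow_spectral if_distrib[of "\<lambda>f. f _ _"])
  finally show ?thesis .
qed

section \<open>The parity test and the Hamiltonian\<close>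

definition parity_accept :: "nat \<Rightarrow> (nat \<times> nat \<Rightarrow> real) \<Rightarrow> (nat \<times> nat \<Rightarrow> real) \<Rightarrow> bool list \<Rightarrow> real" where
  "parity_accept n p s m = (\<Sum>(j1, j2)\<in>pairs n. p (j1, j2) *
      (if sgn_bit (m ! j1 \<noteq> m ! j2) = - s (j1, j2) then 1 else 0))"

lemma parity_accept_affine:
  assumes s_pm: "s ` pairs n \<subseteq> {-1, 1}"
  shows "parity_accept n p s m
       = (\<Sum>J\<in>pairs n. p J / 2 * (1 - s J * sgn_bit (m ! fst J \<noteq> m ! snd J)))"
  unfolding parity_accept_def case_prod_beta prod.collapse
proof (intro sum.cong refl)
  fix J
  assume "J \<in> pairs n"
  then have "s J = 1 \<or> s J = -1"
    using s_pm by auto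
  moreover have "sgn_bit (m ! fst J \<noteq> m ! snd J) = 1 \<or> sgn_bit (m ! fst J \<noteq> m ! snd J) = -1"
    by (simp add: sgn_bit_def)
  ultimately show "p J * (if sgn_bit (m ! fst J \<noteq> m ! snd J) = - s J then 1 else 0)
      = p J / 2 * (1 - s J * sgn_bit (m ! fst J \<noteq> m ! snd J))"
    by auto
qed

lemma parity_accept_le_1:
  assumes "\<And>J. J \<in> pairs n \<Longrightarrow> 0 \<le> p J" "(\<Sum>J\<in>pairs n. p J) = 1"
  shows "parity_accept n p s m \<le> 1"
proof -
  have "parity_accept n p s m \<le> (\<Sum>J\<in>pairs n. p J)"
    unfolding parity_accept_def case_prod_beta using assms(1) by (intro sum_mono) auto
  then show ?thesis
    using assms(2) by simp
qed

lemma sum_key_expect_parity_accept: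
  assumes s_pm: "s ` pairs n \<subseteq> {-1, 1}"
  shows "(\<Sum>m\<in>bits n. key_expect n A h m * parity_accept n p s m)
       = (\<Sum>J\<in>pairs n. p J / 2 * (Re (tr n A)
            - s J * Re (tr n (mmul n A (two_local n (if h then X1 else Z1) (fst J) (snd J))))))"
proof -
  let ?q = "key_expect n A h"
  let ?sg = "\<lambda>J m. sgn_bit (m ! fst J \<noteq> m ! snd J)"
  have "(\<Sum>m\<in>bits n. ?q m * parity_accept n p s m)
      = (\<Sum>m\<in>bits n. \<Sum>J\<in>pairs n. p J / 2 * ?q m - p J / 2 * s J * (?q m * ?sg J m))"
    unfolding parity_accept_affine[OF s_pm] sum_distrib_left
    by (intro sum.cong refl) (simp add: algebra_simps)
  also have "\<dots> = (\<Sum>J\<in>pairs n. p J / 2 * (\<Sum>m\<in>bits n. ?q m)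
      - p J / 2 * s J * (\<Sum>m\<in>bits n. ?q m * ?sg J m))"
    by (subst sum.swap) (simp only: sum_subtractf sum_distrib_left)
  also have "\<dots> = (\<Sum>J\<in>pairs n. p J / 2 * (Re (tr n A)
            - s J * Re (tr n (mmul n A (two_local n (if h then X1 else Z1) (fst J) (snd J))))))"
  proof (intro sum.cong refl)
    fix J
    assume "J \<in> pairs n"
    then show "p J / 2 * (\<Sum>m\<in>bits n. ?q m) - p J / 2 * s J * (\<Sum>m\<in>bits n. ?q m * ?sg J m)
        = p J / 2 * (Re (tr n A)
            - s J * Re (tr n (mmul n A (two_local n (if h then X1 else Z1) (fst J) (snd J)))))"
      using sum_key_expect_parity[of "fst J" "snd J" n A h]
      by (simp only: prod.collapse sum_key_expect right_diff_distrib mult.assoc)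
  qed
  finally show ?thesis .
qed

lemma Re_tr_mmul_ham:
  "Re (tr n (mmul n A (ham n p s))) = (\<Sum>J\<in>pairs n. p J / 2 * (Re (tr n A)
      + s J / 2 * Re (tr n (mmul n A (two_local n X1 (fst J) (snd J))))
      + s J / 2 * Re (tr n (mmul n A (two_local n Z1 (fst J) (snd J))))))"
proof -
  have tr_mmul_comb: "tr n (mmul n A (\<lambda>a b. c * (B1 a b + d * B2 a b + d * B3 a b)))
      = c * (tr n (mmul n A B1) + d * tr n (mmul n A B2) + d * tr n (mmul n A B3))" for c d B1 B2 B3
    unfolding tr_mmul by (simp add: sum_distrib_left sum.distrib ring_distribs mult_ac)
  have ham_eq: "ham n p s = (\<lambda>a b. \<Sum>J\<in>pairs n. complex_of_real (p J / 2) *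
     (Idq n a b + complex_of_real (s J) / 2 * two_local n X1 (fst J) (snd J) a b
      + complex_of_real (s J) / 2 * two_local n Z1 (fst J) (snd J) a b))"
    unfolding ham_def case_prod_beta by (intro ext sum.cong refl) (simp add: field_simps)
  show ?thesis
    unfolding ham_eq tr_mmul_sum_right tr_mmul_comb by (simp add: tr_mmul_Idq Re_sum)
qed

text \<open>Acceptance probability of the parity test run on the outcome of measuring A in the basis
  H^h, for uniformly random h.\<close>

definition keyed_accept :: "nat \<Rightarrow> (nat \<times> nat \<Rightarrow> real) \<Rightarrow> (nat \<times> nat \<Rightarrow> real) \<Rightarrow> op \<Rightarrow> real" where
  "keyed_accept n p s A =
     (\<Sum>h\<in>(UNIV::bool set). \<Sum>m\<in>bits n. key_expect n A h m * parity_accept n p s m) / 2 ^ (n + 1)"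

lemma keyed_accept_eq:
  assumes s_pm: "s ` pairs n \<subseteq> {-1, 1}"
  shows "keyed_accept n p s A
       = ((\<Sum>J\<in>pairs n. p J) * Re (tr n A) - Re (tr n (mmul n A (ham n p s)))) / 2 ^ n"
proof -
  define T where "T P J = Re (tr n (mmul n A (two_local n P (fst J) (snd J))))" for P J
  have "(\<Sum>h\<in>(UNIV::bool set). \<Sum>m\<in>bits n. key_expect n A h m * parity_accept n p s m)
      = (\<Sum>J\<in>pairs n. p J / 2 * (Re (tr n A) - s J * T X1 J))
      + (\<Sum>J\<in>pairs n. p J / 2 * (Re (tr n A) - s J * T Z1 J))"
    by (simp add: UNIV_bool sum_key_expect_parity_accept[OF s_pm] T_def)
  also have "\<dots> = 2 * (\<Sum>J\<in>pairs n. p J * Re (tr n A)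
      - p J / 2 * (Re (tr n A) + s J / 2 * T X1 J + s J / 2 * T Z1 J))"
    by (simp add: sum.distrib[symmetric] sum_distrib_left) (intro sum.cong refl, simp add: field_simps)
  also have "\<dots> = 2 * ((\<Sum>J\<in>pairs n. p J) * Re (tr n A) - Re (tr n (mmul n A (ham n p s))))"
    by (simp add: Re_tr_mmul_ham sum_subtractf sum_distrib_right T_def)
  finally show ?thesis
    by (simp add: keyed_accept_def field_simps)
qed

lemma keyed_accept_le_tr:
  assumes "psd n A" "\<And>J. J \<in> pairs n \<Longrightarrow> 0 \<le> p J" "(\<Sum>J\<in>pairs n. p J) = 1"
  shows "keyed_accept n p s A \<le> Re (tr n A) / 2 ^ n"
proof -
  have "(\<Sum>h\<in>(UNIV::bool set). \<Sum>m\<in>bits n. key_expect n A h m * parity_accept n p s m)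
      \<le> (\<Sum>h\<in>(UNIV::bool set). \<Sum>m\<in>bits n. key_expect n A h m)"
    using key_expect_nonneg[OF assms(1)] parity_accept_le_1[OF assms(2,3)]
    by (intro sum_mono mult_left_le) auto
  also have "\<dots> = 2 * Re (tr n A)"
    by (simp add: UNIV_bool sum_key_expect)
  finally have "keyed_accept n p s A \<le> 2 * Re (tr n A) / 2 ^ (n + 1)"
    unfolding keyed_accept_def by (rule divide_right_mono) simp
  then show ?thesis
    by simp
qed

section \<open>Completeness\<close>

text \<open>Proof strings may have any length; like mprime, only their first n entries are read.\<close>

definition prefix_bits :: "nat \<Rightarrow> bool list \<Rightarrow> bool list" where
  "prefix_bits n l = map (\<lambda>j. l ! j) [0..<n]"

lemma length_prefix_bits [simp]: "length (prefix_bits n l) = n"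
  by (simp add: prefix_bits_def)

lemma nth_prefix_bits [simp]: "j < n \<Longrightarrow> prefix_bits n l ! j = l ! j"
  by (simp add: prefix_bits_def)

definition correction :: "nat \<Rightarrow> bool \<Rightarrow> bool list \<times> bool list \<Rightarrow> bool list" where
  "correction n h \<pi> = prefix_bits n (if h then snd \<pi> else fst \<pi>)"

lemma length_correction [simp]: "length (correction n h \<pi>) = n"
  by (simp add: correction_def)

definition bell_vec :: "nat \<Rightarrow> bool list \<Rightarrow> bool list \<Rightarrow> bool list \<Rightarrow> bool list \<Rightarrow> complex" where
  "bell_vec n xs zs a1 a2 = (\<Prod>j<n. bell_amp (xs ! j) (zs ! j) (a1 ! j) (a2 ! j))"

definition teleport_vec :: "nat \<Rightarrow> bool list \<Rightarrow> bool list \<Rightarrow> (bool list \<Rightarrow> complex) \<Rightarrow> bool list \<Rightarrow> complex" where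
  "teleport_vec n xs zs v a = (\<Sum>a2\<in>bits n. bell_vec n xs zs a a2 * cnj (v a2))"

lemma tr_bell_proj_tensor_pure:
  "tr (2 * n) (mmul (2 * n) (bell_proj n xs zs) (tensor n \<rho> (\<lambda>a b. v a * cnj (v b))))
   = (\<Sum>a\<in>bits n. \<Sum>b\<in>bits n. cnj (teleport_vec n xs zs v b) * \<rho> b a * teleport_vec n xs zs v a)"
proof -
  let ?\<beta> = "bell_vec n xs zs"
  have proj: "bell_proj n xs zs (a1 @ a2) (b1 @ b2) = ?\<beta> a1 a2 * cnj (?\<beta> b1 b2)"
    if "a1 \<in> bits n" "a2 \<in> bits n" "b1 \<in> bits n" "b2 \<in> bits n" for a1 a2 b1 b2
    using that by (simp add: bell_proj_def bell_vec_def bits_def nth_append prod.distrib cnj_prod)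
  have "tr (2 * n) (mmul (2 * n) (bell_proj n xs zs) (tensor n \<rho> (\<lambda>a b. v a * cnj (v b))))
     = (\<Sum>a1\<in>bits n. \<Sum>a2\<in>bits n. \<Sum>b1\<in>bits n. \<Sum>b2\<in>bits n.
          ?\<beta> a1 a2 * cnj (?\<beta> b1 b2) * (\<rho> b1 a1 * (v b2 * cnj (v a2))))"
    unfolding tr_mmul mult_2 sum_bits_append
    by (intro sum.cong refl) (simp add: proj tensor_def bits_def)
  also have "\<dots> = (\<Sum>a1\<in>bits n. \<Sum>b1\<in>bits n. \<Sum>a2\<in>bits n. \<Sum>b2\<in>bits n.
          ?\<beta> a1 a2 * cnj (?\<beta> b1 b2) * (\<rho> b1 a1 * (v b2 * cnj (v a2))))"
    by (rule sum.cong[OF refl], rule sum.swap)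
  also have "\<dots> = (\<Sum>a\<in>bits n. \<Sum>b\<in>bits n. cnj (teleport_vec n xs zs v b) * \<rho> b a * teleport_vec n xs zs v a)"
    unfolding teleport_vec_def
    by (intro sum.cong refl)
      (simp add: sum_distrib_left sum_distrib_right cnj_sum mult_ac, rule sum.swap)
  finally show ?thesis .
qed

lemma teleport_vec_kP_vec:
  assumes "a \<in> bits n" "m \<in> bits n"
  shows "teleport_vec n xs zs (kP_vec n h m) a
       = complex_of_real (\<Prod>j<n. bell_phase h (xs ! j) (zs ! j) (m ! j) * inv_sqrt2)
         * kP_vec n h (xor_bits m (correction n h (xs, zs))) a"
proof -
  have "teleport_vec n xs zs (kP_vec n h m) a
      = (\<Sum>a2\<in>bits n. \<Prod>j<n. bell_amp (xs ! j) (zs ! j) (a ! j) (a2 ! j) * cnj (pw1 H1 h (a2 ! j) (m ! j)))"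
    by (simp add: teleport_vec_def bell_vec_def kP_vec_def cnj_prod prod.distrib)
  also have "\<dots> = (\<Prod>j<n. bell_amp (xs ! j) (zs ! j) (a ! j) False * cnj (pw1 H1 h False (m ! j))
                        + bell_amp (xs ! j) (zs ! j) (a ! j) True * cnj (pw1 H1 h True (m ! j)))"
    by (rule sum_bits_prod)
  also have "\<dots> = (\<Prod>j<n. complex_of_real (bell_phase h (xs ! j) (zs ! j) (m ! j) * inv_sqrt2)
       * pw1 H1 h (a ! j) (m ! j \<noteq> (if h then zs ! j else xs ! j)))"
    by (simp only: bell_amp_H_pow_contract)
  also have "\<dots> = complex_of_real (\<Prod>j<n. bell_phase h (xs ! j) (zs ! j) (m ! j) * inv_sqrt2)
       * kP_vec n h (xor_bits m (correction n h (xs, zs))) a"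
    unfolding kP_vec_def of_real_prod prod.distrib[symmetric] using assms(2)
    by (intro prod.cong refl) (auto simp: bits_def correction_def)
  finally show ?thesis .
qed

lemma prove_prob_eq:
  assumes m: "m \<in> bits n"
  shows "prove_prob n \<rho> h m \<pi> = key_expect n \<rho> h (xor_bits m (correction n h \<pi>)) / 2 ^ n"
proof -
  obtain xs zs where \<pi>: "\<pi> = (xs, zs)"
    by (cases \<pi>)
  define K where "K = (\<Prod>j<n. bell_phase h (xs ! j) (zs ! j) (m ! j) * inv_sqrt2)"
  let ?v = "kP_vec n h (xor_bits m (correction n h \<pi>))"
  have KK: "K * K = (1 / 2) ^ n"
    unfolding K_def prod.distrib[symmetric]
    by (simp add: inv_sqrt2_sq bell_phase_sq mult_ac flip: mult.assoc)
  have "tr (2 * n) (mmul (2 * n) (bell_proj n xs zs) (tensor n \<rho> (kP n h m)))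
      = (\<Sum>a\<in>bits n. \<Sum>b\<in>bits n. complex_of_real (K * K) * (cnj (?v b) * \<rho> b a * ?v a))"
    unfolding kP_def tr_bell_proj_tensor_pure
    by (intro sum.cong refl) (simp add: teleport_vec_kP_vec[OF _ m] K_def \<pi> mult_ac)
  also have "\<dots> = complex_of_real ((1 / 2) ^ n) * (\<Sum>b\<in>bits n. \<Sum>a\<in>bits n. cnj (?v b) * \<rho> b a * ?v a)"
    unfolding KK sum_distrib_left by (rule sum.swap)
  finally show ?thesis
    unfolding prove_prob_def key_expect_def \<pi> by (simp add: power_one_over)
qed

lemma verify_prob_eq:
  assumes "m \<in> bits n"
  shows "verify_prob n p s h m \<pi> = parity_accept n p s (xor_bits m (correction n h \<pi>))"
proof -
  have "mprime h m \<pi> j = xor_bits m (correction n h \<pi>) ! j" if "j < n" for j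
    using assms that by (auto simp: mprime_def bits_def correction_def)
  then show ?thesis
    unfolding verify_prob_def parity_accept_def by (intro sum.cong refl) (auto simp: pairs_def)
qed

lemma honest_accept_eq_keyed: "honest_accept n p s \<rho> = 2 ^ n * keyed_accept n p s \<rho>"
proof -
  define f where "f h m = key_expect n \<rho> h m * parity_accept n p s m" for h m
  have "honest_accept n p s \<rho>
      = (\<Sum>h\<in>UNIV. \<Sum>\<pi>\<in>bits n \<times> bits n. \<Sum>m\<in>bits n. f h (xor_bits m (correction n h \<pi>)))
        / 2 ^ (n + 1) / 2 ^ n"
    unfolding honest_accept_def
    by (simp add: prove_prob_eq verify_prob_eq f_def sum_divide_distrib sum_distrib_left
        sum.swap[of _ "bits n"])
  also have "\<dots> = (\<Sum>h\<in>UNIV. \<Sum>\<pi>\<in>bits n \<times> bits n. \<Sum>m\<in>bits n. f h m) / 2 ^ (n + 1) / 2 ^ n"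
    by (simp add: sum_bits_xor_bits)
  also have "\<dots> = 2 ^ n * keyed_accept n p s \<rho>"
    by (simp add: keyed_accept_def f_def card_cartesian_product card_bits flip: sum_distrib_left)
  finally show ?thesis .
qed

lemma honest_accept_eq_energy:
  assumes "density n \<rho>" "s ` pairs n \<subseteq> {-1, 1}" "(\<Sum>J\<in>pairs n. p J) = 1"
  shows "honest_accept n p s \<rho> = 1 - Re (tr n (mmul n \<rho> (ham n p s)))"
  using assms by (simp add: honest_accept_eq_keyed keyed_accept_eq density_def)

section \<open>Soundness\<close>

definition z_sign :: "nat \<Rightarrow> bool list \<Rightarrow> bool list \<Rightarrow> complex" where
  "z_sign n z a = (\<Prod>j<n. complex_of_real (sgn_bit (z ! j \<and> a ! j)))"

definition pauli_conj :: "nat \<Rightarrow> bool list \<Rightarrow> bool list \<Rightarrow> op \<Rightarrow> op" where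
  "pauli_conj n x z F = (\<lambda>a b. z_sign n z a * F (xor_bits a x) (xor_bits b x) * z_sign n z b)"

lemma z_sign_sq: "z_sign n z a * z_sign n z a = 1"
  unfolding z_sign_def prod.distrib[symmetric] of_real_mult[symmetric] sgn_bit_sq by simp

lemma cnj_z_sign [simp]: "cnj (z_sign n z a) = z_sign n z a"
  by (simp add: z_sign_def cnj_prod)

lemma quad_form_pauli_conj:
  assumes "length x = n"
  shows "(\<Sum>a\<in>bits n. \<Sum>b\<in>bits n. cnj (w a) * pauli_conj n x z F a b * w b)
       = (\<Sum>a\<in>bits n. \<Sum>b\<in>bits n. cnj (z_sign n z (xor_bits a x) * w (xor_bits a x)) * F a b
            * (z_sign n z (xor_bits b x) * w (xor_bits b x)))"
  by (subst sum_sum_bits_xor_bits[OF assms, symmetric])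
    (intro sum.cong refl, simp add: pauli_conj_def xor_bits_cancel assms mult_ac)

lemma psd_pauli_conj:
  assumes "psd n F" "length x = n"
  shows "psd n (pauli_conj n x z F)"
  unfolding psd_def Let_def quad_form_pauli_conj[OF assms(2)]
proof
  fix v :: "bool list \<Rightarrow> complex"
  show "Im (\<Sum>a\<in>bits n. \<Sum>b\<in>bits n. cnj (z_sign n z (xor_bits a x) * v (xor_bits a x)) * F a b
          * (z_sign n z (xor_bits b x) * v (xor_bits b x))) = 0 \<and>
        0 \<le> Re (\<Sum>a\<in>bits n. \<Sum>b\<in>bits n. cnj (z_sign n z (xor_bits a x) * v (xor_bits a x)) * F a b
          * (z_sign n z (xor_bits b x) * v (xor_bits b x)))"
    using assms(1) unfolding psd_def Let_def
    by (rule spec[where x="\<lambda>a. z_sign n z (xor_bits a x) * v (xor_bits a x)"])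
qed

lemma tr_pauli_conj:
  assumes "length x = n"
  shows "tr n (pauli_conj n x z F) = tr n F"
proof -
  have "tr n (pauli_conj n x z F) = (\<Sum>a\<in>bits n. F (xor_bits a x) (xor_bits a x))"
    unfolding tr_def pauli_conj_def
    by (intro sum.cong refl) (metis z_sign_sq mult.commute mult.left_commute mult_1_right)
  also have "\<dots> = tr n F"
    unfolding tr_def by (rule sum_bits_xor_bits[OF assms])
  finally show ?thesis .
qed

lemma kP_vec_pauli_shift:
  assumes "a \<in> bits n" "length x = n" "length z = n" "m \<in> bits n"
  shows "z_sign n z (xor_bits a x) * kP_vec n h m (xor_bits a x)
       = complex_of_real (\<Prod>j<n. pauli_phase h (x ! j) (z ! j) (m ! j))
         * kP_vec n h (xor_bits m (if h then z else x)) a"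
proof -
  have "z_sign n z (xor_bits a x) * kP_vec n h m (xor_bits a x)
      = (\<Prod>j<n. pw1 H1 h (a ! j \<noteq> x ! j) (m ! j) * complex_of_real (sgn_bit (z ! j \<and> (a ! j \<noteq> x ! j))))"
    unfolding z_sign_def kP_vec_def prod.distrib[symmetric] using assms(1,2)
    by (intro prod.cong refl) (simp add: bits_def mult.commute)
  also have "\<dots> = (\<Prod>j<n. complex_of_real (pauli_phase h (x ! j) (z ! j) (m ! j))
      * pw1 H1 h (a ! j) (m ! j \<noteq> (if h then z ! j else x ! j)))"
    by (simp only: H_pow_pauli_shift)
  also have "\<dots> = complex_of_real (\<Prod>j<n. pauli_phase h (x ! j) (z ! j) (m ! j))
      * kP_vec n h (xor_bits m (if h then z else x)) a"
    unfolding kP_vec_def prod.distrib of_real_prod using assms(2-4)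
    by (intro arg_cong2[where f="(*)"] refl prod.cong) (auto simp: bits_def)
  finally show ?thesis .
qed

lemma key_expect_pauli_conj:
  assumes "length x = n" "length z = n" "m \<in> bits n"
  shows "key_expect n (pauli_conj n x z F) h m = key_expect n F h (xor_bits m (if h then z else x))"
proof -
  define E where "E = (\<Prod>j<n. pauli_phase h (x ! j) (z ! j) (m ! j))"
  have EE: "E * E = 1"
    unfolding E_def prod.distrib[symmetric] pauli_phase_sq by simp
  let ?v = "kP_vec n h (xor_bits m (if h then z else x))"
  have "(\<Sum>a\<in>bits n. \<Sum>b\<in>bits n. cnj (kP_vec n h m a) * pauli_conj n x z F a b * kP_vec n h m b)
      = (\<Sum>a\<in>bits n. \<Sum>b\<in>bits n. complex_of_real (E * E) * (cnj (?v a) * F a b * ?v b))"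
    unfolding quad_form_pauli_conj[OF assms(1)]
    by (intro sum.cong refl) (simp add: kP_vec_pauli_shift[OF _ assms] E_def mult_ac)
  then show ?thesis
    unfolding key_expect_def EE by simp
qed

definition output_accept :: "nat \<Rightarrow> (nat \<times> nat \<Rightarrow> real) \<Rightarrow> (nat \<times> nat \<Rightarrow> real) \<Rightarrow> op
    \<Rightarrow> bool list \<times> bool list \<Rightarrow> real" where
  "output_accept n p s F \<pi> = (\<Sum>h\<in>(UNIV::bool set). \<Sum>m\<in>bits n.
      Re (tr n (mmul n F (kP n h m))) * verify_prob n p s h m \<pi>) / 2 ^ (n + 1)"

text \<open>Undoing the verifier's correction turns an adversary outcome with POVM element F and
  proof (x, z) into the honest situation for the Pauli-conjugated operator Z^z X^x F X^x Z^z.\<close>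

lemma output_accept_eq_keyed:
  "output_accept n p s F \<pi>
   = keyed_accept n p s (pauli_conj n (prefix_bits n (fst \<pi>)) (prefix_bits n (snd \<pi>)) F)"
proof -
  let ?F' = "pauli_conj n (prefix_bits n (fst \<pi>)) (prefix_bits n (snd \<pi>)) F"
  have "(\<Sum>m\<in>bits n. Re (tr n (mmul n F (kP n h m))) * verify_prob n p s h m \<pi>)
      = (\<Sum>m\<in>bits n. key_expect n ?F' h m * parity_accept n p s m)" for h
  proof -
    let ?c = "correction n h \<pi>"
    have "(\<Sum>m\<in>bits n. Re (tr n (mmul n F (kP n h m))) * verify_prob n p s h m \<pi>)
        = (\<Sum>m\<in>bits n. key_expect n F h m * parity_accept n p s (xor_bits m ?c))"
      by (intro sum.cong refl) (simp add: tr_mmul_kP verify_prob_eq)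
    also have "\<dots> = (\<Sum>m\<in>bits n. key_expect n F h (xor_bits m ?c)
        * parity_accept n p s (xor_bits (xor_bits m ?c) ?c))"
      by (rule sum_bits_xor_bits[symmetric]) simp
    also have "\<dots> = (\<Sum>m\<in>bits n. key_expect n ?F' h m * parity_accept n p s m)"
      by (intro sum.cong refl) (simp add: key_expect_pauli_conj xor_bits_cancel correction_def)
    finally show ?thesis .
  qed
  then show ?thesis
    by (simp add: output_accept_def keyed_accept_def)
qed

lemma output_accept_le:
  assumes F: "psd n F"
    and p_nonneg: "\<And>J. J \<in> pairs n \<Longrightarrow> 0 \<le> p J"
    and p_sum: "(\<Sum>J\<in>pairs n. p J) = 1"
    and s_pm: "s ` pairs n \<subseteq> {-1, 1}"
    and no: "\<And>\<rho>. density n \<rho> \<Longrightarrow> \<beta> \<le> Re (tr n (mmul n \<rho> (ham n p s)))"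
  shows "output_accept n p s F \<pi> \<le> (1 - \<beta>) * Re (tr n F) / 2 ^ n"
proof -
  define \<sigma> where "\<sigma> = pauli_conj n (prefix_bits n (fst \<pi>)) (prefix_bits n (snd \<pi>)) F"
  define t where "t = Re (tr n F)"
  have \<sigma>: "psd n \<sigma>"
    unfolding \<sigma>_def by (rule psd_pauli_conj[OF F]) simp
  have tr_\<sigma>: "tr n \<sigma> = complex_of_real t"
    unfolding \<sigma>_def t_def by (simp add: tr_pauli_conj flip: tr_psd(1)[OF F])
  show ?thesis
  proof (cases "t = 0")
    case True
    \<comment> \<open>the promise only covers normalised states\<close>
    then show ?thesis
      using keyed_accept_le_tr[OF \<sigma> p_nonneg p_sum] tr_\<sigma>
      by (simp add: output_accept_eq_keyed \<sigma>_def t_def)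
  next
    case False
    then have "0 < t"
      using tr_psd(2)[OF F] by (simp add: t_def)
    then have "density n (\<lambda>a b. \<sigma> a b / complex_of_real t)"
      unfolding density_def using psd_divide[OF \<sigma>] by (simp add: tr_divide tr_\<sigma>)
    then have "\<beta> \<le> Re (tr n (mmul n (\<lambda>a b. \<sigma> a b / complex_of_real t) (ham n p s)))"
      by (rule no)
    then have "\<beta> \<le> Re (tr n (mmul n \<sigma> (ham n p s))) / t"
      by (simp add: tr_mmul_divide_left)
    then have "\<beta> * t \<le> Re (tr n (mmul n \<sigma> (ham n p s)))"
      using \<open>0 < t\<close> by (simp add: field_simps)
    then have "t - Re (tr n (mmul n \<sigma> (ham n p s))) \<le> (1 - \<beta>) * t"
      by (simp add: algebra_simps)
    then show ?thesis
      by (simp add: output_accept_eq_keyed keyed_accept_eq[OF s_pm] p_sum tr_\<sigma> divide_right_mono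
          flip: \<sigma>_def t_def)
  qed
qed

lemma sum_tr_le_pow:
  assumes "finite S" "psd n (\<lambda>a b. Idq n a b - (\<Sum>u\<in>S. F u a b))"
  shows "(\<Sum>u\<in>S. Re (tr n (F u))) \<le> 2 ^ n"
proof -
  have "(\<Sum>u\<in>S. Re (tr n (F u))) = (\<Sum>a\<in>bits n. Re (\<Sum>u\<in>S. F u a a))"
    unfolding tr_def Re_sum by (rule sum.swap)
  also have "\<dots> \<le> (\<Sum>a\<in>bits n. 1)"
    using psd_diag[OF assms(2)] by (intro sum_mono) (simp add: Idq_apply)
  also have "\<dots> = 2 ^ n"
    by (simp add: card_bits)
  finally show ?thesis .
qed

lemma cheat_prob_eq:
  "cheat_prob n F Lno p s S
   = (\<Sum>u\<in>S. if fst u \<in> Lno then output_accept n (p (fst u)) (s (fst u)) (F u) (snd u) else 0)"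
  unfolding cheat_prob_def output_accept_def
  by (simp add: sum_distrib_left sum_divide_distrib sum.swap[of _ S] if_distrib[of "\<lambda>x. _ * x"]
      cong: if_cong) (intro sum.cong refl, simp)

lemma cheat_prob_le:
  assumes adv: "adversary n F" and S: "finite S" and "\<beta> \<le> 1"
    and p_nonneg: "\<And>x J. x \<in> Lno \<Longrightarrow> J \<in> pairs n \<Longrightarrow> 0 \<le> p x J"
    and p_sum: "\<And>x. x \<in> Lno \<Longrightarrow> (\<Sum>J\<in>pairs n. p x J) = 1"
    and s_pm: "\<And>x. x \<in> Lno \<Longrightarrow> s x ` pairs n \<subseteq> {-1, 1}"
    and no: "\<And>x \<rho>. x \<in> Lno \<Longrightarrow> density n \<rho> \<Longrightarrow> \<beta> \<le> Re (tr n (mmul n \<rho> (ham n (p x) (s x))))"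
  shows "cheat_prob n F Lno p s S \<le> 1 - \<beta>"
proof -
  have F: "psd n (F u)" for u
    using adv unfolding adversary_def by blast
  have "cheat_prob n F Lno p s S \<le> (\<Sum>u\<in>S. (1 - \<beta>) * Re (tr n (F u)) / 2 ^ n)"
    unfolding cheat_prob_eq
    using output_accept_le[OF F p_nonneg p_sum s_pm no] tr_psd(2)[OF F] \<open>\<beta> \<le> 1\<close>
    by (intro sum_mono) auto
  also have "\<dots> = (1 - \<beta>) * (\<Sum>u\<in>S. Re (tr n (F u))) / 2 ^ n"
    by (simp add: sum_distrib_left sum_divide_distrib)
  also have "\<dots> \<le> (1 - \<beta>) * 2 ^ n / 2 ^ n"
    using sum_tr_le_pow[OF S] adv S \<open>\<beta> \<le> 1\<close> unfolding adversary_def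
    by (intro divide_right_mono mult_left_mono) auto
  finally show ?thesis
    by simp
qed

theorem mainTheorem9:
  fixes N :: nat
    and Lyes Lno :: "'x set"
    and p s :: "'x \<Rightarrow> nat \<times> nat \<Rightarrow> real"
    and R :: "'x \<Rightarrow> 'w set"
    and hist :: "'x \<Rightarrow> 'w \<Rightarrow> op"
    and \<alpha> \<beta> :: real
  assumes ab: "0 < \<alpha>" "\<alpha> < \<beta>" "\<beta> < 1"
    and p_pos: "\<And>x j1 j2. x \<in> Lyes \<union> Lno \<Longrightarrow> (j1, j2) \<in> pairs N \<Longrightarrow> p x (j1, j2) > 0"
    and p_sum: "\<And>x. x \<in> Lyes \<union> Lno \<Longrightarrow> (\<Sum>jj\<in>pairs N. p x jj) = 1"
    and s_pm: "\<And>x j1 j2. x \<in> Lyes \<union> Lno \<Longrightarrow> (j1, j2) \<in> pairs N \<Longrightarrow> s x (j1, j2) \<in> {-1, 1}"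
    and yes: "\<And>x w. x \<in> Lyes \<Longrightarrow> w \<in> R x \<Longrightarrow>
       density N (hist x w) \<and> Re (tr N (mmul N (hist x w) (ham N (p x) (s x)))) \<le> \<alpha>"
    and no: "\<And>x \<rho>. x \<in> Lno \<Longrightarrow> density N \<rho> \<Longrightarrow>
       Re (tr N (mmul N \<rho> (ham N (p x) (s x)))) \<ge> \<beta>"
  shows "(\<forall>x\<in>Lyes. \<forall>w\<in>R x. honest_accept N (p x) (s x) (hist x w) \<ge> 1 - \<alpha>)
       \<and> (\<forall>F :: 'x \<times> (bool list \<times> bool list) \<Rightarrow> op. adversary N F \<longrightarrow>
            (\<forall>S. finite S \<longrightarrow> cheat_prob N F Lno p s S \<le> 1 - \<beta>))"
proof (intro conjI ballI allI impI)
  fix x w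
  assume x: "x \<in> Lyes" and w: "w \<in> R x"
  then have "s x ` pairs N \<subseteq> {-1, 1}" "(\<Sum>J\<in>pairs N. p x J) = 1"
    using s_pm p_sum by (force simp: pairs_def)+
  then show "1 - \<alpha> \<le> honest_accept N (p x) (s x) (hist x w)"
    using yes[OF x w] by (simp add: honest_accept_eq_energy)
next
  fix F :: "'x \<times> (bool list \<times> bool list) \<Rightarrow> op" and S :: "('x \<times> (bool list \<times> bool list)) set"
  assume "adversary N F" "finite S"
  then show "cheat_prob N F Lno p s S \<le> 1 - \<beta>"
  proof (rule cheat_prob_le)
    show "\<beta> \<le> 1"
      using ab by simp
    show "0 \<le> p x J" if "x \<in> Lno" "J \<in> pairs N" for x J
      using p_pos[of x "fst J" "snd J"] that by simp
    show "s x ` pairs N \<subseteq> {-1, 1}" if "x \<in> Lno" for x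
      using s_pm that by (force simp: pairs_def)
  qed (use p_sum no in auto)
qed

end
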